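(* Let $(S,d)$ be a metric space, let $\bullet\in\{\mathrm{FM},\mathrm{BL}\}$, and let $\mu$ be a finite signed Borel measure on $S$ that is separable, i.e. there is a separable set $S_0\subset S$ with $|\mu|(S_0)=|\mu|(S)$. Then $$\|\mu\|_\bullet^*=\sup\Big\{\int_S f\,d\mu : f\in E^S_\bullet\Big\}.$$
   Context: $\mathrm{BL}(S)$ is the space of bounded real-valued Lipschitz functions on $S$, $|f|_L=\sup_{x\neq y}|f(x)-f(y)|/d(x,y)$ (with $|f|_L=0$ on a singleton), $\|f\|_{\mathrm{BL}}=\|f\|_\infty+|f|_L$, $\|f\|_{\mathrm{FM}}=\max(\|f\|_\infty,|f|_L)$, $B^S_\bullet=\{f\in\mathrm{BL}(S):\|f\|_\bullet\le1\}$, and $\|\mu\|^*_\bullet=\sup_{f\in B^S_\bullet}\int_S f\,d\mu$. $|\mu|$ is the total variation measure. Subsets $P\subset S$ carry the restricted metric; $\operatorname{ext}$ denotes extreme points and $\operatorname{ext}_*(B^P_\bullet)=\operatorname{ext}(B^P_\bullet)\setminus\{f:|f|=\mathbf{1}\}$. For non-empty $P\subset S$, $f\in\mathrm{BL}(P)$: $\mathcal{E}^{S,0}_P f(x)=\sup_{p\in P}[f(p)-|f|_L d(p,x)]$, $\mathcal{E}^S_P f=\max(\mathcal{E}^{S,0}_P f,-\|f\|_\infty)$. $E^S_{\mathrm{BL}}=\bigcup_{P\subset S\text{ finite}}\mathcal{E}^S_P(\operatorname{ext}_*(B^P_{\mathrm{BL}}))\cup\{\mathbf{1},-\mathbf{1}\}$;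 $E^S_{\mathrm{FM}}=\bigcup_{P\subset S\text{ finite}}\mathcal{E}^S_P(\operatorname{ext}_*(B^P_{\mathrm{FM}}))\cup\{f\in B^S_{\mathrm{FM}}:|f|=\mathbf{1}\}\cup\{h_P:P\subset S\text{ finite, non-empty}\}$, with $h_P(x)=\max\big(-1,\sup_{p\in P}[1-d(x,p)]\big)$. *)

theory Defs
  imports "HOL-Analysis.Analysis" "HOL-Probability.Probability"
begin

text \<open>Functions on a subset P of the metric space (type 'a) are represented as
  functions 'a => real that vanish outside P (so that convexity / extreme points
  are computed in the vector space of functions on P).\<close>

definition lip_seminorm :: "'a::metric_space set \<Rightarrow> ('a \<Rightarrow> real) \<Rightarrow> real" where
  "lip_seminorm P f =
     (if \<exists>x\<in>P. \<exists>y\<in>P. x \<noteq> y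
      then (SUP xy \<in> {(x,y). x \<in> P \<and> y \<in> P \<and> x \<noteq> y}. \<bar>f (fst xy) - f (snd xy)\<bar> / dist (fst xy) (snd xy))
      else 0)"

definition sup_norm_on :: "'a set \<Rightarrow> ('a \<Rightarrow> real) \<Rightarrow> real" where
  "sup_norm_on P f = (if P = {} then 0 else (SUP x\<in>P. \<bar>f x\<bar>))"

definition BL :: "'a::metric_space set \<Rightarrow> ('a \<Rightarrow> real) set" where
  "BL P = {f. (\<forall>x. x \<notin> P \<longrightarrow> f x = 0) \<and> bounded (f ` P) \<and> (\<exists>C. C-lipschitz_on P f)}"

datatype bl_kind = FM | BLk

definition bl_norm :: "bl_kind \<Rightarrow> 'a::metric_space set \<Rightarrow> ('a \<Rightarrow> real) \<Rightarrow> real" where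
  "bl_norm k P f = (case k of
      FM \<Rightarrow> max (sup_norm_on P f) (lip_seminorm P f)
    | BLk \<Rightarrow> sup_norm_on P f + lip_seminorm P f)"

definition unit_ball :: "bl_kind \<Rightarrow> 'a::metric_space set \<Rightarrow> ('a \<Rightarrow> real) set" where
  "unit_ball k P = {f \<in> BL P. bl_norm k P f \<le> 1}"

definition extreme_points :: "('a \<Rightarrow> real) set \<Rightarrow> ('a \<Rightarrow> real) set" where
  "extreme_points K = {f \<in> K. \<forall>g\<in>K. \<forall>h\<in>K. \<forall>t::real. 0 < t \<and> t < 1 \<and>
        f = (\<lambda>x. t * g x + (1 - t) * h x) \<longrightarrow> g = f \<and> h = f}"

definition extreme_points_star :: "bl_kind \<Rightarrow> 'a::metric_space set \<Rightarrow> ('a \<Rightarrow> real) set" where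
  "extreme_points_star k P = extreme_points (unit_ball k P) - {f. \<forall>x\<in>P. \<bar>f x\<bar> = 1}"

definition ext0_op :: "'a::metric_space set \<Rightarrow> ('a \<Rightarrow> real) \<Rightarrow> 'a \<Rightarrow> real" where
  "ext0_op P f x = (SUP p\<in>P. f p - lip_seminorm P f * dist p x)"

definition ext_op :: "'a::metric_space set \<Rightarrow> ('a \<Rightarrow> real) \<Rightarrow> 'a \<Rightarrow> real" where
  "ext_op P f x = max (ext0_op P f x) (- sup_norm_on P f)"

definition h_fun :: "'a::metric_space set \<Rightarrow> 'a \<Rightarrow> real" where
  "h_fun P x = max (-1) (SUP p\<in>P. 1 - dist x p)"

definition E_set :: "bl_kind \<Rightarrow> ('a::metric_space \<Rightarrow> real) set" where
  "E_set k = (\<Union>P\<in>{P. finite P \<and> P \<noteq> {}}. ext_op P ` extreme_points_star k P) \<union>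
     (case k of
        BLk \<Rightarrow> {(\<lambda>_. 1), (\<lambda>_. -1)}
      | FM \<Rightarrow> {f \<in> unit_ball FM UNIV. \<forall>x. \<bar>f x\<bar> = 1} \<union>
              {h_fun P | P. finite P \<and> P \<noteq> {}})"

text \<open>A finite signed Borel measure is given by its Jordan decomposition
  mu = mu_p - mu_n with mu_p, mu_n finite Borel measures that are mutually singular;
  the total variation is |mu| = mu_p + mu_n.\<close>

definition signed_integral :: "'a measure \<Rightarrow> 'a measure \<Rightarrow> ('a \<Rightarrow> real) \<Rightarrow> real" where
  "signed_integral mp mn f = integral\<^sup>L mp f - integral\<^sup>L mn f"

definition dual_norm :: "bl_kind \<Rightarrow> 'a::metric_space measure \<Rightarrow> 'a measure \<Rightarrow> real" where
  "dual_norm k mp mn = Sup (signed_integral mp mn ` unit_ball k UNIV)"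

end

theory Submission
  imports Defs
begin

text \<open>Every element of the unit ball is bounded by 1 and 1-Lipschitz. Covering a full-measure
  separable set by countably many \<open>\<delta>\<close>-balls and discretising on the disjointed balls, the
  integral against \<open>\<mu>\<close> is therefore, uniformly on the unit ball, within \<open>\<epsilon>\<close> of a functional
  \<open>\<Lambda> h = \<Sum>\<^sub>j c\<^sub>j h(d\<^sub>j)\<close> that only sees a finite set \<open>P\<close>. The unit ball of \<open>BL(P)\<close> is a compact
  convex subset of a finite-dimensional space, so \<open>\<Lambda>\<close> attains its maximum over it at an
  extreme point \<open>g\<close>. Such a \<open>g\<close> agrees on \<open>P\<close> with a member of \<open>E\<close>: if \<open>|g| \<noteq> 1\<close> its
  McShane extension is norm-preserving; if \<open>|g| = 1\<close> then for BL the budget \<open>1 - |g x|\<close> of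
  the Lipschitz constant vanishes, so \<open>g\<close> is constant, and for FM the points where
  \<open>g = 1\<close> and \<open>g = -1\<close> are at distance at least 2, so \<open>g\<close> is matched by \<open>h\<^sub>Q\<close> with
  \<open>Q = {g = 1}\<close>. Thus integrating any \<open>f\<close> of the unit ball is dominated, up to \<open>2\<epsilon>\<close>, by
  integrating some member of \<open>E\<close>.\<close>

lemma abs_le_sup_norm_on:
  assumes "bounded (f ` S)" "x \<in> S"
  shows "\<bar>f x\<bar> \<le> sup_norm_on S f"
proof -
  have "bdd_above ((\<lambda>x. \<bar>f x\<bar>) ` S)"
    using assms(1) unfolding bounded_iff bdd_above_def by auto
  then show ?thesis
    using assms by (auto simp: sup_norm_on_def intro: cSUP_upper)
qed

lemma sup_norm_on_le:
  assumes "0 \<le> M" "\<And>x. x \<in> S \<Longrightarrow> \<bar>f x\<bar> \<le> M"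
  shows "sup_norm_on S f \<le> M"
  using assms by (auto simp: sup_norm_on_def intro: cSUP_least)

lemma lipschitz_on_lip_seminorm:
  assumes "C-lipschitz_on S f"
  shows "(lip_seminorm S f)-lipschitz_on S f"
proof -
  let ?pairs = "{(x,y). x \<in> S \<and> y \<in> S \<and> x \<noteq> y}"
  let ?q = "\<lambda>xy. \<bar>f (fst xy) - f (snd xy)\<bar> / dist (fst xy) (snd xy)"
  have bdd: "bdd_above (?q ` ?pairs)"
    using assms by (intro bdd_aboveI2[of _ _ C])
      (auto simp: lipschitz_on_def dist_real_def divide_le_eq)
  have quot: "?q (x,y) \<le> lip_seminorm S f" if "x \<in> S" "y \<in> S" "x \<noteq> y" for x y
    using that bdd unfolding lip_seminorm_def by (auto intro!: cSUP_upper2[where x="(x,y)"])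
  have nonneg: "0 \<le> lip_seminorm S f"
  proof (cases "\<exists>x\<in>S. \<exists>y\<in>S. x \<noteq> y")
    case True
    then obtain x y where "x \<in> S" "y \<in> S" "x \<noteq> y" by blast
    from quot[OF this] show ?thesis by (simp add: order_trans[rotated])
  qed (simp add: lip_seminorm_def)
  have "\<bar>f x - f y\<bar> \<le> lip_seminorm S f * dist x y" if "x \<in> S" "y \<in> S" for x y
    using quot[OF that] nonneg by (cases "x = y") (auto simp: divide_le_eq)
  with nonneg show ?thesis by (auto simp: lipschitz_on_def dist_real_def)
qed

lemma lip_seminorm_le:
  assumes "0 \<le> L" "\<And>x y. x \<in> S \<Longrightarrow> y \<in> S \<Longrightarrow> \<bar>f x - f y\<bar> \<le> L * dist x y"
  shows "lip_seminorm S f \<le> L"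
  using assms unfolding lip_seminorm_def
  by (auto intro!: cSUP_least simp: pos_divide_le_eq)

lemma mem_unit_ball_UNIV:
  fixes f :: "'a::metric_space \<Rightarrow> real"
  assumes "\<And>x. \<bar>f x\<bar> \<le> M" "0 \<le> L" "\<And>x y. \<bar>f x - f y\<bar> \<le> L * dist x y"
    and "(case k of FM \<Rightarrow> max M L | BLk \<Rightarrow> M + L) \<le> 1"
  shows "f \<in> unit_ball k UNIV"
proof -
  have "0 \<le> M" using assms(1) by (rule order_trans[OF abs_ge_zero])
  then have "sup_norm_on UNIV f \<le> M" by (rule sup_norm_on_le) (use assms(1) in auto)
  moreover have "lip_seminorm UNIV f \<le> L" by (rule lip_seminorm_le) (use assms(2,3) in auto)
  moreover have "bounded (range f)" using assms(1) by (auto simp: bounded_iff)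
  moreover have "L-lipschitz_on UNIV f" using assms(2,3) by (auto simp: lipschitz_on_def dist_real_def)
  ultimately show ?thesis
    using assms(4) by (cases k) (auto simp: unit_ball_def BL_def bl_norm_def)
qed

section \<open>A pointwise description of the unit ball\<close>

text \<open>For BL, \<open>\<parallel>g\<parallel>\<^sub>\<infinity> + |g|\<^sub>L \<le> 1\<close> says that each value \<open>|g x|\<close> leaves the Lipschitz budget
  \<open>1 - |g x|\<close>.\<close>

definition unit_ball_cond :: "bl_kind \<Rightarrow> 'a::metric_space set \<Rightarrow> ('a \<Rightarrow> real) \<Rightarrow> bool" where
  "unit_ball_cond k S g \<longleftrightarrow> (\<forall>x\<in>S. \<bar>g x\<bar> \<le> 1 \<and>
     (\<forall>y\<in>S. \<forall>z\<in>S. \<bar>g y - g z\<bar> \<le> (case k of FM \<Rightarrow> 1 | BLk \<Rightarrow> 1 - \<bar>g x\<bar>) * dist y z))"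

lemma unit_ball_cond_lipschitz:
  assumes "unit_ball_cond k S g" "y \<in> S" "z \<in> S"
  shows "\<bar>g y - g z\<bar> \<le> dist y z"
proof -
  have "(case k of FM \<Rightarrow> 1 | BLk \<Rightarrow> 1 - \<bar>g y\<bar>) * dist y z \<le> dist y z"
    by (cases k) (simp_all add: algebra_simps)
  with assms show ?thesis by (force simp: unit_ball_cond_def)
qed

lemma unit_ball_iff:
  "g \<in> unit_ball k S \<longleftrightarrow> (\<forall>x. x \<notin> S \<longrightarrow> g x = 0) \<and> unit_ball_cond k S g"
proof
  assume g: "g \<in> unit_ball k S"
  then obtain C where "C-lipschitz_on S g" and bnd: "bounded (g ` S)"
    and norm: "bl_norm k S g \<le> 1" and van: "\<forall>x. x \<notin> S \<longrightarrow> g x = 0"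
    by (auto simp: unit_ball_def BL_def)
  then have L: "(lip_seminorm S g)-lipschitz_on S g" by (intro lipschitz_on_lip_seminorm)
  have "unit_ball_cond k S g"
    unfolding unit_ball_cond_def
  proof (intro ballI conjI)
    fix x y z assume "x \<in> S" "y \<in> S" "z \<in> S"
    have x: "\<bar>g x\<bar> \<le> sup_norm_on S g" by (rule abs_le_sup_norm_on[OF bnd \<open>x \<in> S\<close>])
    have yz: "\<bar>g y - g z\<bar> \<le> lip_seminorm S g * dist y z"
      using lipschitz_onD[OF L \<open>y \<in> S\<close> \<open>z \<in> S\<close>] by (simp add: dist_real_def)
    have "0 \<le> lip_seminorm S g" using L by (rule lipschitz_on_nonneg)
    then have "sup_norm_on S g \<le> 1"
      and "lip_seminorm S g \<le> (case k of FM \<Rightarrow> 1 | BLk \<Rightarrow> 1 - \<bar>g x\<bar>)"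
      using norm x by (cases k; simp add: bl_norm_def)+
    then show "\<bar>g x\<bar> \<le> 1"
      and "\<bar>g y - g z\<bar> \<le> (case k of FM \<Rightarrow> 1 | BLk \<Rightarrow> 1 - \<bar>g x\<bar>) * dist y z"
      using x yz by (meson order_trans mult_right_mono zero_le_dist)+
  qed
  with van show "(\<forall>x. x \<notin> S \<longrightarrow> g x = 0) \<and> unit_ball_cond k S g" by blast
next
  assume "(\<forall>x. x \<notin> S \<longrightarrow> g x = 0) \<and> unit_ball_cond k S g"
  then have van: "\<forall>x. x \<notin> S \<longrightarrow> g x = 0" and c: "unit_ball_cond k S g" by blast+
  have abs1: "\<bar>g x\<bar> \<le> 1" if "x \<in> S" for x using c that by (simp add: unit_ball_cond_def)
  have budget: "\<bar>g y - g z\<bar> \<le> (case k of FM \<Rightarrow> 1 | BLk \<Rightarrow> 1 - \<bar>g x\<bar>) * dist y z"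
    if "x \<in> S" "y \<in> S" "z \<in> S" for x y z
    using c that by (simp add: unit_ball_cond_def)
  have lip1: "\<bar>g y - g z\<bar> \<le> 1 * dist y z" if "y \<in> S" "z \<in> S" for y z
    using unit_ball_cond_lipschitz[OF c that] by simp
  have "bounded (g ` S)" using abs1 by (auto simp: bounded_iff)
  moreover have "1-lipschitz_on S g" using lip1 by (auto simp: lipschitz_on_def dist_real_def)
  moreover have "bl_norm k S g \<le> 1"
  proof (cases k)
    case FM
    have "sup_norm_on S g \<le> 1" by (rule sup_norm_on_le) (use abs1 in auto)
    moreover have "lip_seminorm S g \<le> 1" by (rule lip_seminorm_le) (use lip1 in auto)
    ultimately show ?thesis using FM by (simp add: bl_norm_def)
  next
    case BLk
    have lip_budget: "lip_seminorm S g \<le> 1 - \<bar>g x\<bar>" if "x \<in> S" for x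
      using abs1[OF that] budget[OF that] BLk by (intro lip_seminorm_le) auto
    have "lip_seminorm S g \<le> 1" by (rule lip_seminorm_le) (use lip1 in auto)
    then have "sup_norm_on S g \<le> 1 - lip_seminorm S g"
      using lip_budget by (intro sup_norm_on_le) force+
    then show ?thesis using BLk by (simp add: bl_norm_def)
  qed
  ultimately show "g \<in> unit_ball k S" using van by (auto simp: unit_ball_def BL_def)
qed

lemma unit_ball_UNIV_bounded_lipschitz:
  assumes "h \<in> unit_ball k UNIV"
  shows "\<forall>x. \<bar>h x\<bar> \<le> 1" and "1-lipschitz_on UNIV h"
proof -
  have c: "unit_ball_cond k UNIV h" using assms by (simp add: unit_ball_iff)
  then show "\<forall>x. \<bar>h x\<bar> \<le> 1" by (simp add: unit_ball_cond_def)
  then show "1-lipschitz_on UNIV h"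
    using unit_ball_cond_lipschitz[OF c] by (auto simp: lipschitz_on_def dist_real_def)
qed

section \<open>Extensions from a finite set\<close>

lemma abs_max_diff_le: "\<bar>max a c - max b c\<bar> \<le> \<bar>a - b\<bar>" for a b c :: real
  by (auto simp: max_def)

lemma SUP_minus_dist_lipschitz:
  fixes a :: "'a::metric_space \<Rightarrow> real"
  assumes "finite P" "P \<noteq> {}" "0 \<le> L"
  shows "\<bar>(SUP p\<in>P. a p - L * dist p x) - (SUP p\<in>P. a p - L * dist p y)\<bar> \<le> L * dist x y"
proof -
  have le: "(SUP p\<in>P. a p - L * dist p x) \<le> (SUP p\<in>P. a p - L * dist p y) + L * dist x y" for x y
  proof (rule cSUP_least[OF assms(2)])
    fix p assume "p \<in> P"
    then have "a p - L * dist p y \<le> (SUP p\<in>P. a p - L * dist p y)"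
      using assms(1) by (intro cSUP_upper) auto
    moreover have "L * dist p y \<le> L * dist p x + L * dist x y"
      using mult_left_mono[OF dist_triangle[of p y x] assms(3)] by (simp add: distrib_left)
    ultimately show "a p - L * dist p x \<le> (SUP p\<in>P. a p - L * dist p y) + L * dist x y"
      by linarith
  qed
  from le[of x y] le[of y x] show ?thesis by (simp add: dist_commute abs_le_iff)
qed

lemma ext_op_eq_on:
  assumes "finite P" "g \<in> BL P" "p \<in> P"
  shows "ext_op P g p = g p"
proof -
  obtain C where C: "C-lipschitz_on P g" and bnd: "bounded (g ` P)" using assms(2) by (auto simp: BL_def)
  from C have L: "(lip_seminorm P g)-lipschitz_on P g" by (rule lipschitz_on_lip_seminorm)
  have "ext0_op P g p = g p" unfolding ext0_op_def
  proof (rule antisym)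
    have "g q - lip_seminorm P g * dist q p \<le> g p" if "q \<in> P" for q
      using lipschitz_onD[OF L that assms(3)] by (simp add: dist_real_def abs_le_iff)
    then show "(SUP q\<in>P. g q - lip_seminorm P g * dist q p) \<le> g p"
      using assms(3) by (intro cSUP_least) auto
    show "g p \<le> (SUP q\<in>P. g q - lip_seminorm P g * dist q p)"
      using assms(1,3) by (intro cSUP_upper2[where x=p]) auto
  qed
  moreover have "- sup_norm_on P g \<le> g p" using abs_le_sup_norm_on[OF bnd assms(3)] by linarith
  ultimately show ?thesis by (simp add: ext_op_def)
qed

lemma ext_op_in_unit_ball:
  assumes "finite P" "P \<noteq> {}" "g \<in> unit_ball k P"
  shows "ext_op P g \<in> unit_ball k UNIV"
proof -
  define L where "L = lip_seminorm P g"
  define M where "M = sup_norm_on P g"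
  obtain C where C: "C-lipschitz_on P g" and bnd: "bounded (g ` P)" and norm: "bl_norm k P g \<le> 1"
    using assms(3) by (auto simp: unit_ball_def BL_def)
  from C have "L-lipschitz_on P g" unfolding L_def by (rule lipschitz_on_lip_seminorm)
  then have L0: "0 \<le> L" by (rule lipschitz_on_nonneg)
  have gM: "\<bar>g p\<bar> \<le> M" if "p \<in> P" for p unfolding M_def by (rule abs_le_sup_norm_on[OF bnd that])
  then have M0: "0 \<le> M" using assms(2) by (meson abs_ge_zero ex_in_conv order_trans)
  have "g p - L * dist p x \<le> M" if "p \<in> P" for p x
    using gM[OF that] mult_nonneg_nonneg[OF L0 zero_le_dist[of p x]] by linarith
  then have "ext0_op P g x \<le> M" for x
    unfolding ext0_op_def L_def[symmetric] using assms(2) by (intro cSUP_least) auto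
  then have bound: "\<bar>ext_op P g x\<bar> \<le> M" for x using M0 by (simp add: ext_op_def M_def[symmetric] abs_le_iff max_def)
  have lip: "\<bar>ext_op P g x - ext_op P g y\<bar> \<le> L * dist x y" for x y
    using abs_max_diff_le SUP_minus_dist_lipschitz[OF assms(1,2) L0]
    unfolding ext_op_def ext0_op_def L_def[symmetric] by (rule order_trans)
  have "(case k of FM \<Rightarrow> max M L | BLk \<Rightarrow> M + L) \<le> 1"
    using norm unfolding L_def M_def by (simp add: bl_norm_def)
  then show ?thesis by (rule mem_unit_ball_UNIV[OF bound L0 lip])
qed

(* the factor 1 puts h_fun in the shape of SUP_minus_dist_lipschitz *)
lemma h_fun_eq_max: "h_fun Q x = max (SUP q\<in>Q. 1 - 1 * dist q x) (-1)"
  by (simp add: h_fun_def dist_commute max.commute)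

lemma h_fun_in_unit_ball:
  assumes "finite Q" "Q \<noteq> {}"
  shows "h_fun Q \<in> unit_ball FM UNIV"
proof (rule mem_unit_ball_UNIV[where M=1 and L=1])
  show "\<bar>h_fun Q x\<bar> \<le> 1" for x
    using assms(2) by (auto simp: h_fun_eq_max abs_le_iff intro!: cSUP_least)
  show "\<bar>h_fun Q x - h_fun Q y\<bar> \<le> 1 * dist x y" for x y
    unfolding h_fun_eq_max
    using abs_max_diff_le SUP_minus_dist_lipschitz[OF assms, where a="\<lambda>_. 1" and L=1] by (rule order_trans) simp
qed simp_all

lemma h_fun_eq_one:
  assumes "finite Q" "q \<in> Q"
  shows "h_fun Q q = 1"
proof -
  have "(SUP p\<in>Q. 1 - 1 * dist p q) = 1"
    using assms by (intro antisym cSUP_least cSUP_upper2[where x=q]) auto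
  then show ?thesis by (simp add: h_fun_eq_max)
qed

lemma h_fun_eq_minus_one:
  assumes "Q \<noteq> {}" "\<And>q. q \<in> Q \<Longrightarrow> 2 \<le> dist x q"
  shows "h_fun Q x = -1"
proof -
  have "(SUP p\<in>Q. 1 - 1 * dist p x) \<le> -1"
    using assms by (intro cSUP_least) (auto simp: dist_commute)
  then show ?thesis by (simp add: h_fun_eq_max)
qed

lemma const_in_unit_ball: "\<bar>c\<bar> = 1 \<Longrightarrow> (\<lambda>_. c) \<in> unit_ball k UNIV"
  by (rule mem_unit_ball_UNIV[where M=1 and L=0]) (cases k; simp)+

lemma E_set_subset_unit_ball: "E_set k \<subseteq> (unit_ball k UNIV :: ('a::metric_space \<Rightarrow> real) set)"
proof -
  have "ext_op P g \<in> unit_ball k UNIV"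
    if "finite P" "P \<noteq> {}" "g \<in> extreme_points_star k P" for P :: "'a set" and g
    using that ext_op_in_unit_ball by (auto simp: extreme_points_star_def extreme_points_def)
  then show ?thesis
    unfolding E_set_def by (cases k) (auto simp: const_in_unit_ball intro!: h_fun_in_unit_ball)
qed

section \<open>Extreme points of the unit ball over a finite set\<close>

lemma continuous_on_apply [continuous_intros]:
  "continuous_on S (\<lambda>g::'a \<Rightarrow> 'b::topological_space. g x)"
  by (rule continuous_on_product_then_coordinatewise[OF continuous_on_id])

lemma compact_unit_ball:
  assumes "finite P"
  shows "compact (unit_ball k P)"
proof -
  have budget_continuous:
    "continuous_on UNIV (\<lambda>g::'a \<Rightarrow> real. case k of FM \<Rightarrow> 1 | BLk \<Rightarrow> 1 - \<bar>g x\<bar>)" for x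
    by (cases k) (simp_all, intro continuous_intros)
  define B where "B x = (if x \<in> P then {-1..1::real} else {0})" for x :: 'a
  have "compactin (product_topology (\<lambda>_. euclidean) UNIV) (PiE UNIV B)"
    by (subst compactin_PiE) (auto simp: B_def)
  then have "compact (Pi UNIV B)" by (simp add: euclidean_product_topology PiE_UNIV_domain)
  moreover have "unit_ball k P \<subseteq> Pi UNIV B"
    by (auto simp: unit_ball_iff unit_ball_cond_def B_def abs_le_iff)
  moreover have "unit_ball k P = (\<Inter>x\<in>-P. {g. g x = 0}) \<inter> (\<Inter>x\<in>P. \<Inter>y\<in>P. \<Inter>z\<in>P.
      {g. \<bar>g x\<bar> \<le> 1} \<inter> {g. \<bar>g y - g z\<bar> \<le> (case k of FM \<Rightarrow> 1 | BLk \<Rightarrow> 1 - \<bar>g x\<bar>) * dist y z})"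
    by (auto simp: unit_ball_iff unit_ball_cond_def)
  moreover have "closed \<dots>"
    using budget_continuous
    by (intro closed_Int closed_INT ballI closed_Collect_eq closed_Collect_le continuous_intros)
  ultimately show ?thesis by (metis compact_Int_closed inf.absorb_iff2)
qed

lemma extreme_point_if_max_sum_squares:
  fixes F :: "('a \<Rightarrow> real) set"
  assumes "finite P" "\<And>h x. h \<in> F \<Longrightarrow> x \<notin> P \<Longrightarrow> h x = 0" "g \<in> F"
    and max: "\<And>h. h \<in> F \<Longrightarrow> (\<Sum>p\<in>P. (h p)\<^sup>2) \<le> (\<Sum>p\<in>P. (g p)\<^sup>2)"
  shows "g \<in> extreme_points F"
proof -
  let ?Q = "\<lambda>h. \<Sum>p\<in>P. (h p)\<^sup>2"
  have "h1 = g \<and> h2 = g"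
    if h: "h1 \<in> F" "h2 \<in> F" and t: "0 < t" "t < 1" and g_eq: "g = (\<lambda>x. t * h1 x + (1 - t) * h2 x)"
    for h1 h2 t
  proof -
    have "(t * a + (1 - t) * b)\<^sup>2 = t * a\<^sup>2 + (1 - t) * b\<^sup>2 - t * (1 - t) * (a - b)\<^sup>2" for a b
      by (simp add: power2_eq_square algebra_simps)
    then have "?Q g = t * ?Q h1 + (1 - t) * ?Q h2 - t * (1 - t) * (\<Sum>p\<in>P. (h1 p - h2 p)\<^sup>2)"
      unfolding g_eq by (simp add: sum_subtractf sum_distrib_left sum.distrib)
    moreover have "t * ?Q h1 \<le> t * ?Q g" "(1 - t) * ?Q h2 \<le> (1 - t) * ?Q g"
      using max[OF h(1)] max[OF h(2)] t by simp_all
    ultimately have "t * (1 - t) * (\<Sum>p\<in>P. (h1 p - h2 p)\<^sup>2) \<le> 0" by (simp add: algebra_simps)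
    then have "(\<Sum>p\<in>P. (h1 p - h2 p)\<^sup>2) \<le> 0" using t by (simp add: mult_le_0_iff)
    then have "\<forall>p\<in>P. (h1 p - h2 p)\<^sup>2 = 0"
      using sum_nonneg_eq_0_iff[OF assms(1), of "\<lambda>p. (h1 p - h2 p)\<^sup>2"] by (simp add: sum_nonneg antisym)
    then have "h1 p = h2 p" if "p \<in> P" for p using that by simp
    then have "h1 = h2" using assms(2)[OF h(1)] assms(2)[OF h(2)] by (metis ext)
    then show ?thesis using g_eq by (auto simp: fun_eq_iff algebra_simps)
  qed
  with assms(3) show ?thesis unfolding extreme_points_def by blast
qed

lemma extreme_point_of_maximizing_face:
  assumes aff: "\<And>g h t. Lam (\<lambda>x. t * g x + (1 - t) * h x) = t * Lam g + (1 - t) * Lam h"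
    and max: "\<And>h. h \<in> K \<Longrightarrow> Lam h \<le> m"
    and g: "g \<in> extreme_points {h \<in> K. Lam h = m}"
  shows "g \<in> extreme_points K"
proof -
  have "h1 = g \<and> h2 = g"
    if h: "h1 \<in> K" "h2 \<in> K" and t: "0 < t" "t < 1" and g_eq: "g = (\<lambda>x. t * h1 x + (1 - t) * h2 x)"
    for h1 h2 t
  proof -
    have "Lam g = m" using g by (simp add: extreme_points_def)
    then have "t * (m - Lam h1) + (1 - t) * (m - Lam h2) = 0"
      using aff[of t h1 h2] g_eq by (simp add: algebra_simps)
    moreover have "0 \<le> t * (m - Lam h1)" "0 \<le> (1 - t) * (m - Lam h2)"
      using max[OF h(1)] max[OF h(2)] t by simp_all
    ultimately have "Lam h1 = m" "Lam h2 = m" using t by (simp_all add: add_nonneg_eq_0_iff)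
    then show ?thesis using g h t g_eq unfolding extreme_points_def by blast
  qed
  with g show ?thesis by (auto simp: extreme_points_def)
qed

text \<open>A finite-dimensional Krein--Milman argument: the affine functional attains its maximum on a
  face, and on that face the maximiser of the strictly convex \<open>\<Sum>\<^sub>p g(p)\<^sup>2\<close> is extreme.\<close>

lemma exists_extreme_point_maximizer:
  assumes "compact K" "K \<noteq> {}" "finite P" "\<And>h x. h \<in> K \<Longrightarrow> x \<notin> P \<Longrightarrow> h x = 0"
    and "continuous_on UNIV Lam"
    and aff: "\<And>g h t. Lam (\<lambda>x. t * g x + (1 - t) * h x) = t * Lam g + (1 - t) * Lam h"
  shows "\<exists>g\<in>extreme_points K. \<forall>h\<in>K. Lam h \<le> Lam g"
proof -
  obtain g1 where g1: "g1 \<in> K" "\<forall>h\<in>K. Lam h \<le> Lam g1"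
    using continuous_attains_sup[OF assms(1,2) continuous_on_subset[OF assms(5) subset_UNIV]]
    by blast
  define F where "F = K \<inter> {h. Lam h = Lam g1}"
  have "compact F"
    unfolding F_def by (intro compact_Int_closed assms(1) closed_Collect_eq assms(5) continuous_on_const)
  moreover have "F \<noteq> {}" using g1 by (auto simp: F_def)
  moreover have "continuous_on F (\<lambda>h. \<Sum>p\<in>P. (h p)\<^sup>2)" by (intro continuous_intros)
  ultimately obtain g where g: "g \<in> F" "\<forall>h\<in>F. (\<Sum>p\<in>P. (h p)\<^sup>2) \<le> (\<Sum>p\<in>P. (g p)\<^sup>2)"
    using continuous_attains_sup by blast
  have "g \<in> extreme_points F"
    using g assms(3,4) by (intro extreme_point_if_max_sum_squares) (auto simp: F_def)
  moreover have "F = {h \<in> K. Lam h = Lam g1}" by (auto simp: F_def)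
  ultimately have "g \<in> extreme_points K"
    using g1(2) by (auto intro: extreme_point_of_maximizing_face[OF aff, where m="Lam g1"])
  moreover have "Lam g = Lam g1" using g(1) by (simp add: F_def)
  ultimately show ?thesis using g1(2) by (intro bexI[of _ g]) simp_all
qed

section \<open>Extreme points are matched by members of \<open>E\<close>\<close>

lemma unit_ball_BLk_unimodular_const:
  assumes "g \<in> unit_ball BLk P" "\<forall>x\<in>P. \<bar>g x\<bar> = 1" "x \<in> P" "y \<in> P"
  shows "g x = g y"
proof -
  have "\<bar>g x - g y\<bar> \<le> (1 - \<bar>g x\<bar>) * dist x y"
    using assms(1,3,4) by (simp add: unit_ball_iff unit_ball_cond_def)
  then show ?thesis using assms(2,3) by simp
qed

lemma unimodular_cases: "\<bar>a\<bar> = 1 \<Longrightarrow> a = 1 \<or> a = -1" for a :: real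
  by (cases "0 \<le> a") simp_all

lemma h_fun_agrees_with_unimodular:
  assumes "g \<in> unit_ball FM P" "\<forall>x\<in>P. \<bar>g x\<bar> = 1" "finite P" "x \<in> P"
    and Q: "Q = {p \<in> P. g p = 1}" "Q \<noteq> {}"
  shows "h_fun Q x = g x"
proof (cases "g x = 1")
  case True
  then show ?thesis using assms(3,4) Q by (simp add: h_fun_eq_one)
next
  case False
  then have gx: "g x = -1" using assms(2,4) unimodular_cases by blast
  have c: "unit_ball_cond FM P g" using assms(1) by (simp add: unit_ball_iff)
  have "2 \<le> dist x q" if "q \<in> Q" for q
  proof -
    have "q \<in> P" "g q = 1" using that Q(1) by auto
    then show ?thesis using unit_ball_cond_lipschitz[OF c assms(4) \<open>q \<in> P\<close>] gx by simp
  qed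
  then show ?thesis using Q(2) gx by (simp add: h_fun_eq_minus_one)
qed

lemma extreme_point_agrees_with_E_set:
  assumes "finite P" "P \<noteq> {}" "g \<in> extreme_points (unit_ball k P)"
  shows "\<exists>e\<in>E_set k. \<forall>x\<in>P. e x = g x"
proof (cases "g \<in> extreme_points_star k P")
  case True
  have "ext_op P g \<in> E_set k"
    unfolding E_set_def by (rule UnI1, rule UN_I[of P]) (use assms(1,2) True in auto)
  moreover have "g \<in> unit_ball k P" using assms(3) by (simp add: extreme_points_def)
  then have "\<forall>x\<in>P. ext_op P g x = g x" using ext_op_eq_on[OF assms(1)] by (simp add: unit_ball_def)
  ultimately show ?thesis by blast
next
  case False
  then have unimodular: "\<forall>x\<in>P. \<bar>g x\<bar> = 1" using assms(3) by (simp add: extreme_points_star_def)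
  have g: "g \<in> unit_ball k P" using assms(3) by (simp add: extreme_points_def)
  show ?thesis
  proof (cases k)
    case BLk
    obtain p where p: "p \<in> P" using assms(2) by blast
    then have "g p = 1 \<or> g p = -1" using unimodular unimodular_cases by blast
    then have "(\<lambda>_. g p) \<in> E_set k" unfolding BLk E_set_def by auto
    moreover have "g x = g p" if "x \<in> P" for x
      using g unimodular that p unfolding BLk by (rule unit_ball_BLk_unimodular_const)
    ultimately show ?thesis by auto
  next
    case FM
    define Q where "Q = {p \<in> P. g p = 1}"
    show ?thesis
    proof (cases "Q = {}")
      case True
      then have "\<forall>x\<in>P. g x = -1" using unimodular unimodular_cases by (auto simp: Q_def)
      moreover have "(\<lambda>_. -1) \<in> E_set k"
        unfolding FM E_set_def by (rule UnI2) (simp add: const_in_unit_ball)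
      ultimately show ?thesis by auto
    next
      case False
      have "finite Q" using assms(1) by (simp add: Q_def)
      have "h_fun Q \<in> E_set k"
        unfolding FM E_set_def by (rule UnI2) (use \<open>finite Q\<close> False in auto)
      moreover have "h_fun Q x = g x" if "x \<in> P" for x
        using g unimodular assms(1) that Q_def False unfolding FM
        by (rule h_fun_agrees_with_unimodular)
      ultimately show ?thesis by auto
    qed
  qed
qed

lemma finite_functional_le_E_set:
  assumes f: "f \<in> unit_ball k UNIV" and P: "finite P" "P \<noteq> {}" and d: "\<And>j. j < N \<Longrightarrow> d j \<in> P"
  shows "\<exists>e\<in>E_set k. (\<Sum>j<N. c j * f (d j)) \<le> (\<Sum>j<N. c j * e (d j))"
proof -
  define Lam where "Lam g = (\<Sum>j<N. c j * g (d j))" for g :: "'a \<Rightarrow> real"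
  have Lam_cong: "Lam g = Lam h" if "\<forall>x\<in>P. g x = h x" for g h
    using that d by (auto simp: Lam_def intro!: sum.cong)
  define f0 where "f0 x = (if x \<in> P then f x else 0)" for x
  have f0: "f0 \<in> unit_ball k P"
    using f by (cases k) (auto simp: unit_ball_iff unit_ball_cond_def f0_def)
  have aff: "Lam (\<lambda>x. t * g x + (1 - t) * h x) = t * Lam g + (1 - t) * Lam h" for g h t
    by (simp add: Lam_def distrib_left mult.left_commute sum.distrib sum_distrib_left)
  have cont: "continuous_on UNIV Lam" unfolding Lam_def by (intro continuous_intros)
  have "\<exists>g\<in>extreme_points (unit_ball k P). \<forall>h\<in>unit_ball k P. Lam h \<le> Lam g"
    by (intro exists_extreme_point_maximizer[OF compact_unit_ball[OF P(1)] _ P(1) _ cont aff])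
      (use f0 in blast, simp add: unit_ball_iff)
  then obtain g where g: "g \<in> extreme_points (unit_ball k P)" "\<forall>h\<in>unit_ball k P. Lam h \<le> Lam g"
    by blast
  obtain e where e: "e \<in> E_set k" "\<forall>x\<in>P. e x = g x"
    using extreme_point_agrees_with_E_set[OF P g(1)] by blast
  have "Lam f = Lam f0" by (rule Lam_cong) (simp add: f0_def)
  also have "\<dots> \<le> Lam g" using g(2) f0 by blast
  also have "\<dots> = Lam e" using e(2) by (intro Lam_cong) simp
  finally show ?thesis using e(1) unfolding Lam_def by blast
qed

section \<open>Discretising the integral on a separable set\<close>

lemma integrable_bounded_continuous:
  fixes h :: "'a::metric_space \<Rightarrow> real"
  assumes "sets M = sets borel" "finite_measure M" "continuous_on UNIV h" "\<And>x. \<bar>h x\<bar> \<le> B"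
  shows "integrable M h"
proof -
  have "h \<in> borel_measurable M"
    using borel_measurable_continuous_onI[OF assms(3)] by (simp add: measurable_cong_sets[OF assms(1) refl])
  then show ?thesis using assms(4) by (intro finite_measure.integrable_const_bound[OF assms(2)]) auto
qed

lemma abs_integral_le_measure:
  fixes h :: "'a::metric_space \<Rightarrow> real"
  assumes "sets M = sets borel" "finite_measure M" "continuous_on UNIV h" "\<And>x. \<bar>h x\<bar> \<le> B"
  shows "\<bar>integral\<^sup>L M h\<bar> \<le> B * measure M (space M)"
proof -
  have "\<bar>integral\<^sup>L M h\<bar> \<le> integral\<^sup>L M (\<lambda>x. \<bar>h x\<bar>)" by (rule integral_abs_bound)
  also have "\<dots> \<le> integral\<^sup>L M (\<lambda>_. B)"
    using assms integrable_bounded_continuous[OF assms]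
    by (intro integral_mono) (auto simp: finite_measure.integrable_const)
  also have "\<dots> = B * measure M (space M)" by simp
  finally show ?thesis .
qed

lemma abs_diff_disjointed_step_function_le:
  fixes h :: "'a::metric_space \<Rightarrow> real" and d :: "nat \<Rightarrow> 'a"
  assumes "\<And>x. \<bar>h x\<bar> \<le> 1" "1-lipschitz_on UNIV h" "0 \<le> \<delta>"
  shows "\<bar>h x - (\<Sum>j<N. h (d j) * indicator (disjointed (\<lambda>j. ball (d j) \<delta>) j) x)\<bar>
           \<le> \<delta> + indicator (- (\<Union>j<N. ball (d j) \<delta>)) x"
proof (cases "x \<in> (\<Union>j<N. ball (d j) \<delta>)")
  case True
  let ?A = "disjointed (\<lambda>j. ball (d j) \<delta>)"
  have "x \<in> (\<Union>j<N. ?A j)"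
    using True finite_UN_disjointed_eq[of "\<lambda>j. ball (d j) \<delta>" N] by (simp add: atLeast0LessThan)
  then obtain i where i: "i < N" "x \<in> ?A i" by blast
  have "x \<notin> ?A j" if "j \<noteq> i" for j
    using i(2) disjoint_family_onD[OF disjoint_family_disjointed[of "\<lambda>j. ball (d j) \<delta>"] UNIV_I UNIV_I that]
    by blast
  then have "(\<Sum>j<N. h (d j) * indicator (?A j) x) = (\<Sum>j<N. if j = i then h (d i) else 0)"
    using i(2) by (intro sum.cong) auto
  also have "\<dots> = h (d i)" using i(1) by simp
  finally have step: "(\<Sum>j<N. h (d j) * indicator (?A j) x) = h (d i)" .
  have "x \<in> ball (d i) \<delta>" using i(2) disjointed_subset[of "\<lambda>j. ball (d j) \<delta>" i] by blast
  then have "\<bar>h x - h (d i)\<bar> \<le> \<delta>"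
    using lipschitz_onD[OF assms(2), of x "d i"] by (simp add: dist_real_def dist_commute)
  then show ?thesis using True step by simp
next
  case False
  then have "x \<notin> disjointed (\<lambda>j. ball (d j) \<delta>) j" if "j < N" for j
    using that disjointed_subset[of "\<lambda>j. ball (d j) \<delta>" j] by blast
  then show ?thesis using False assms(1)[of x] assms(3) by simp
qed

lemma integral_approx_disjointed_step_function:
  fixes h :: "'a::metric_space \<Rightarrow> real" and d :: "nat \<Rightarrow> 'a"
  assumes M: "sets M = sets borel" "finite_measure M"
    and h: "\<And>x. \<bar>h x\<bar> \<le> 1" "1-lipschitz_on UNIV h" and "0 \<le> \<delta>"
  shows "\<bar>integral\<^sup>L M h - (\<Sum>j<N. h (d j) * measure M (disjointed (\<lambda>j. ball (d j) \<delta>) j))\<bar>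
           \<le> \<delta> * measure M (space M) + measure M (space M - (\<Union>j<N. ball (d j) \<delta>))"
proof -
  interpret finite_measure M by (rule M(2))
  have space: "space M = UNIV" using sets_eq_imp_space_eq[OF M(1)] by simp
  let ?A = "disjointed (\<lambda>j. ball (d j) \<delta>)"
  let ?C = "- (\<Union>j<N. ball (d j) \<delta>)"
  define s where "s x = (\<Sum>j<N. h (d j) * indicator (?A j) x)" for x
  have A: "?A j \<in> sets M" for j unfolding M(1) disjointed_def by (intro sets.Diff borel_open) auto
  have C: "?C \<in> sets M" unfolding M(1) by (rule borel_comp, rule borel_open) auto
  have int_h: "integrable M h"
    using M h lipschitz_on_continuous_on[OF h(2)] by (intro integrable_bounded_continuous)
  have int_A: "integrable M (indicator (?A j) :: 'a \<Rightarrow> real)" for j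
    using A by (intro integrable_real_indicator) (auto simp: less_top[symmetric])
  have int_s: "integrable M s"
    unfolding s_def using int_A by (intro Bochner_Integration.integrable_sum integrable_mult_right)
  have int_s_eq: "integral\<^sup>L M s = (\<Sum>j<N. h (d j) * measure M (?A j))"
    unfolding s_def using int_A space by (subst Bochner_Integration.integral_sum) auto
  have int_bound: "integrable M (\<lambda>x. \<delta> + indicator ?C x :: real)"
    using C by (intro Bochner_Integration.integrable_add integrable_real_indicator)
      (auto simp: less_top[symmetric])
  have "\<bar>integral\<^sup>L M h - integral\<^sup>L M s\<bar> = \<bar>integral\<^sup>L M (\<lambda>x. h x - s x)\<bar>"
    by (simp only: Bochner_Integration.integral_diff[OF int_h int_s])
  also have "\<dots> \<le> integral\<^sup>L M (\<lambda>x. \<bar>h x - s x\<bar>)" by (rule integral_abs_bound)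
  also have "\<dots> \<le> integral\<^sup>L M (\<lambda>x. \<delta> + indicator ?C x)"
    using abs_diff_disjointed_step_function_le[OF h \<open>0 \<le> \<delta>\<close>] \<open>0 \<le> \<delta>\<close>
    by (intro integral_mono'[OF int_bound]) (auto simp: s_def)
  also have "\<dots> = \<delta> * measure M (space M) + measure M ?C"
    using C by (subst Bochner_Integration.integral_add) (auto simp: space less_top[symmetric])
  also have "?C = space M - (\<Union>j<N. ball (d j) \<delta>)" by (simp only: space Compl_eq_Diff_UNIV)
  finally show ?thesis by (simp only: int_s_eq[symmetric])
qed

lemma eventually_measure_uncovered_less:
  assumes "finite_measure M" "\<And>j. B j \<in> sets M" "S \<in> sets M" "S \<subseteq> (\<Union>j. B j)"
    and "measure M S = measure M (space M)" "0 < \<epsilon>"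
  shows "eventually (\<lambda>N. measure M (space M - (\<Union>j<N. B j)) < \<epsilon>) sequentially"
proof -
  interpret finite_measure M by (rule assms(1))
  have lim: "(\<lambda>N. measure M (space M - (\<Union>j<N. B j))) \<longlonglongrightarrow> measure M (\<Inter>N. space M - (\<Union>j<N. B j))"
    using assms(2) by (intro finite_Lim_measure_decseq) (auto simp: decseq_def)
  have "measure M (\<Inter>N. space M - (\<Union>j<N. B j)) \<le> measure M (space M - S)"
    using assms(2-4) by (intro finite_measure_mono) auto
  also have "\<dots> = 0" using assms(3,5) by (simp add: finite_measure_compl)
  finally have "measure M (\<Inter>N. space M - (\<Union>j<N. B j)) < \<epsilon>" using assms(6) by linarith
  then show ?thesis by (rule order_tendstoD(2)[OF lim])
qed

lemma separable_space_ball_cover: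
  fixes S :: "'a::metric_space set"
  assumes "separable_space (top_of_set S)" "0 < \<delta>"
  obtains d :: "nat \<Rightarrow> 'a" where "S \<subseteq> (\<Union>j. ball (d j) \<delta>)"
proof -
  obtain C where C: "countable C" "C \<subseteq> S" "(top_of_set S) closure_of C = S"
    using assms(1) unfolding separable_space_def by auto
  then have "S \<inter> closure C = S"
    by (simp add: closure_of_subtopology Int_absorb1)
  then have "S \<subseteq> closure C" by blast
  show ?thesis
  proof (cases "C = {}")
    case True
    then show ?thesis using \<open>S \<subseteq> closure C\<close> that by auto
  next
    case False
    have "S \<subseteq> (\<Union>j. ball (from_nat_into C j) \<delta>)"
    proof
      fix x assume "x \<in> S"
      then obtain y where "y \<in> C" "dist y x < \<delta>"
        using \<open>S \<subseteq> closure C\<close> assms(2) closure_approachable by blast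
      then show "x \<in> (\<Union>j. ball (from_nat_into C j) \<delta>)"
        using from_nat_into_surj[OF C(1)] by (metis UN_iff UNIV_I mem_ball)
    qed
    then show ?thesis by (rule that)
  qed
qed

lemma measure_eq_space_if_emeasure_sum_eq:
  assumes "finite_measure M" "finite_measure N"
    and "emeasure M S + emeasure N S = emeasure M (space M) + emeasure N (space N)"
  shows "measure M S = measure M (space M)" and "measure N S = measure N (space N)"
proof -
  interpret M: finite_measure M by (rule assms(1))
  interpret N: finite_measure N by (rule assms(2))
  have "ennreal (measure M S) + ennreal (measure N S)
      = ennreal (measure M (space M)) + ennreal (measure N (space N))"
    using assms(3) by (simp add: M.emeasure_eq_measure N.emeasure_eq_measure)
  then have "ennreal (measure M S + measure N S) = ennreal (measure M (space M) + measure N (space N))"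
    by (simp only: ennreal_plus[OF measure_nonneg measure_nonneg])
  then have "measure M S + measure N S = measure M (space M) + measure N (space N)"
    by (subst (asm) ennreal_inj) (auto intro: add_nonneg_nonneg)
  moreover have "measure M S \<le> measure M (space M)" "measure N S \<le> measure N (space N)"
    by (rule M.bounded_measure N.bounded_measure)+
  ultimately show "measure M S = measure M (space M)" "measure N S = measure N (space N)"
    by linarith+
qed

lemma signed_integral_approx_by_finite_functional:
  fixes mp mn :: "'a::metric_space measure"
  assumes mp: "sets mp = sets borel" "finite_measure mp" and mn: "sets mn = sets borel" "finite_measure mn"
    and S0: "S0 \<in> sets borel" "separable_space (top_of_set S0)"
    and full: "measure mp S0 = measure mp UNIV" "measure mn S0 = measure mn UNIV" and "0 < \<epsilon>"
  shows "\<exists>(N::nat) (d::nat \<Rightarrow> 'a) (c::nat \<Rightarrow> real). 0 < N \<and>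
    (\<forall>h. (\<forall>x. \<bar>h x\<bar> \<le> 1) \<and> 1-lipschitz_on UNIV h \<longrightarrow>
      \<bar>signed_integral mp mn h - (\<Sum>j<N. c j * h (d j))\<bar> \<le> \<epsilon>)"
proof -
  have space: "space mp = UNIV" "space mn = UNIV"
    using sets_eq_imp_space_eq[OF mp(1)] sets_eq_imp_space_eq[OF mn(1)] by simp_all
  define T where "T = measure mp UNIV + measure mn UNIV"
  define \<delta> where "\<delta> = \<epsilon> / (2 * (T + 1))"
  have "0 \<le> T" by (simp add: T_def)
  then have \<delta>: "0 < \<delta>" "\<delta> * T \<le> \<epsilon> / 2"
    using \<open>0 < \<epsilon>\<close> by (auto simp: \<delta>_def field_simps)
  obtain d :: "nat \<Rightarrow> 'a" where cover: "S0 \<subseteq> (\<Union>j. ball (d j) \<delta>)"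
    by (rule separable_space_ball_cover[OF S0(2) \<delta>(1)])
  have tail: "eventually (\<lambda>N. measure M (space M - (\<Union>j<N. ball (d j) \<delta>)) < \<epsilon> / 4) sequentially"
    if "sets M = sets borel" "finite_measure M" "measure M S0 = measure M UNIV" for M :: "'a measure"
    using that S0(1) cover \<open>0 < \<epsilon>\<close> sets_eq_imp_space_eq[OF that(1)]
    by (intro eventually_measure_uncovered_less[where S=S0]) auto
  have "eventually (\<lambda>N. 0 < N \<and> measure mp (space mp - (\<Union>j<N. ball (d j) \<delta>)) < \<epsilon> / 4 \<and>
      measure mn (space mn - (\<Union>j<N. ball (d j) \<delta>)) < \<epsilon> / 4) sequentially"
    by (intro eventually_conj eventually_gt_at_top tail mp mn full)
  then obtain N :: nat where N: "0 < N" "measure mp (UNIV - (\<Union>j<N. ball (d j) \<delta>)) < \<epsilon> / 4"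
    "measure mn (UNIV - (\<Union>j<N. ball (d j) \<delta>)) < \<epsilon> / 4"
    unfolding eventually_sequentially space by blast
  have \<delta>T: "\<delta> * measure mp UNIV + \<delta> * measure mn UNIV \<le> \<epsilon> / 2"
    using \<delta>(2) by (simp add: T_def distrib_left)
  let ?A = "disjointed (\<lambda>j. ball (d j) \<delta>)"
  show ?thesis
  proof (intro exI[of _ N] exI[of _ d] exI[of _ "\<lambda>j. measure mp (?A j) - measure mn (?A j)"]
      conjI allI impI N(1))
    fix h :: "'a \<Rightarrow> real" assume "(\<forall>x. \<bar>h x\<bar> \<le> 1) \<and> 1-lipschitz_on UNIV h"
    then have h: "\<forall>x. \<bar>h x\<bar> \<le> 1" "1-lipschitz_on UNIV h" by blast+
    let ?sp = "\<Sum>j<N. h (d j) * measure mp (?A j)" and ?sn = "\<Sum>j<N. h (d j) * measure mn (?A j)"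
    have "\<bar>integral\<^sup>L mp h - ?sp\<bar> \<le> \<delta> * measure mp UNIV + measure mp (UNIV - (\<Union>j<N. ball (d j) \<delta>))"
      using integral_approx_disjointed_step_function[OF mp _ h(2) less_imp_le[OF \<delta>(1)]] h(1)
      unfolding space by blast
    moreover have "\<bar>integral\<^sup>L mn h - ?sn\<bar> \<le> \<delta> * measure mn UNIV + measure mn (UNIV - (\<Union>j<N. ball (d j) \<delta>))"
      using integral_approx_disjointed_step_function[OF mn _ h(2) less_imp_le[OF \<delta>(1)]] h(1)
      unfolding space by blast
    moreover have "(\<Sum>j<N. (measure mp (?A j) - measure mn (?A j)) * h (d j)) = ?sp - ?sn"
      by (simp add: sum_subtractf[symmetric] algebra_simps)
    ultimately show "\<bar>signed_integral mp mn h - (\<Sum>j<N. (measure mp (?A j) - measure mn (?A j)) * h (d j))\<bar> \<le> \<epsilon>"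
      using N(2,3) \<delta>T unfolding signed_integral_def by linarith
  qed
qed

lemma Sup_image_eq_of_approximating_subset:
  fixes I :: "'b \<Rightarrow> real"
  assumes "E \<subseteq> B" "E \<noteq> {}" "bdd_above (I ` B)"
    and approx: "\<And>f \<epsilon>. f \<in> B \<Longrightarrow> 0 < \<epsilon> \<Longrightarrow> \<exists>e\<in>E. I f \<le> I e + \<epsilon>"
  shows "Sup (I ` B) = Sup (I ` E)"
proof (rule antisym)
  have bdd: "bdd_above (I ` E)" using assms(1,3) by (meson bdd_above_mono image_mono)
  show "Sup (I ` B) \<le> Sup (I ` E)"
  proof (rule cSup_least)
    show "I ` B \<noteq> {}" using assms(1,2) by auto
    fix y assume "y \<in> I ` B"
    then obtain f where f: "f \<in> B" "y = I f" by blast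
    show "y \<le> Sup (I ` E)"
    proof (rule field_le_epsilon)
      fix \<epsilon> :: real assume "0 < \<epsilon>"
      then obtain e where "e \<in> E" "I f \<le> I e + \<epsilon>" using approx[OF f(1)] by blast
      moreover have "I e \<le> Sup (I ` E)" using \<open>e \<in> E\<close> bdd by (intro cSup_upper) auto
      ultimately show "y \<le> Sup (I ` E) + \<epsilon>" using f(2) by linarith
    qed
  qed
  show "Sup (I ` E) \<le> Sup (I ` B)"
    using assms(1-3) by (intro cSup_subset_mono) auto
qed

lemma abs_signed_integral_le:
  fixes mp mn :: "'a::metric_space measure"
  assumes "sets mp = sets borel" "finite_measure mp" "sets mn = sets borel" "finite_measure mn"
    and "h \<in> unit_ball k UNIV"
  shows "\<bar>signed_integral mp mn h\<bar> \<le> measure mp UNIV + measure mn UNIV"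
proof -
  have "continuous_on UNIV h"
    using unit_ball_UNIV_bounded_lipschitz(2)[OF assms(5)] by (rule lipschitz_on_continuous_on)
  then have "\<bar>integral\<^sup>L M h\<bar> \<le> measure M UNIV" if "sets M = sets borel" "finite_measure M" for M
    using abs_integral_le_measure[OF that, of h 1] unit_ball_UNIV_bounded_lipschitz(1)[OF assms(5)]
      sets_eq_imp_space_eq[OF that(1)] by simp
  from this[OF assms(1,2)] this[OF assms(3,4)] show ?thesis
    unfolding signed_integral_def by linarith
qed

lemma signed_integral_dominated_by_E_set:
  fixes mp mn :: "'a::metric_space measure"
  assumes mp: "sets mp = sets borel" "finite_measure mp" and mn: "sets mn = sets borel" "finite_measure mn"
    and S0: "S0 \<in> sets borel" "separable_space (top_of_set S0)"
    and full: "measure mp S0 = measure mp UNIV" "measure mn S0 = measure mn UNIV"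
    and f: "f \<in> unit_ball k UNIV" and "0 < \<epsilon>"
  shows "\<exists>e\<in>E_set k. signed_integral mp mn f \<le> signed_integral mp mn e + \<epsilon>"
proof -
  have "0 < \<epsilon> / 2" using \<open>0 < \<epsilon>\<close> by simp
  then obtain N :: nat and d :: "nat \<Rightarrow> 'a" and c where N: "0 < N"
    and approx_lip: "\<forall>h. (\<forall>x. \<bar>h x\<bar> \<le> 1) \<and> 1-lipschitz_on UNIV h \<longrightarrow>
      \<bar>signed_integral mp mn h - (\<Sum>j<N. c j * h (d j))\<bar> \<le> \<epsilon> / 2"
    using signed_integral_approx_by_finite_functional[OF mp mn S0 full] by blast
  have approx: "\<bar>signed_integral mp mn h - (\<Sum>j<N. c j * h (d j))\<bar> \<le> \<epsilon> / 2"
    if "h \<in> unit_ball k UNIV" for h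
    using approx_lip unit_ball_UNIV_bounded_lipschitz[OF that] by blast
  have "finite (d ` {..<N})" "d ` {..<N} \<noteq> {}" using N by auto
  then obtain e where e: "e \<in> E_set k" "(\<Sum>j<N. c j * f (d j)) \<le> (\<Sum>j<N. c j * e (d j))"
    using finite_functional_le_E_set[OF f] by blast
  have "e \<in> unit_ball k UNIV" using e(1) E_set_subset_unit_ball by blast
  then have "signed_integral mp mn f \<le> signed_integral mp mn e + \<epsilon>"
    using approx[OF f] approx[of e] e(2) by linarith
  with e(1) show ?thesis by blast
qed

theorem corollary5p6:
  fixes mp mn :: "'a::metric_space measure" and k :: bl_kind
  assumes "sets mp = sets borel" and "sets mn = sets borel"
    and "finite_measure mp" and "finite_measure mn"
    and "\<exists>A\<in>sets borel. emeasure mp A = 0 \<and> emeasure mn (UNIV - A) = 0"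
    and "\<exists>S0\<in>sets borel. separable_space (top_of_set S0) \<and>
           emeasure mp S0 + emeasure mn S0 = emeasure mp UNIV + emeasure mn UNIV"
  shows "dual_norm k mp mn = Sup (signed_integral mp mn ` E_set k)"
proof -
  have space: "space mp = UNIV" "space mn = UNIV"
    using sets_eq_imp_space_eq[OF assms(1)] sets_eq_imp_space_eq[OF assms(2)] by simp_all
  obtain S0 where S0: "S0 \<in> sets borel" "separable_space (top_of_set S0)"
    and "emeasure mp S0 + emeasure mn S0 = emeasure mp (space mp) + emeasure mn (space mn)"
    using assms(6) unfolding space by blast
  then have full: "measure mp S0 = measure mp UNIV" "measure mn S0 = measure mn UNIV"
    using measure_eq_space_if_emeasure_sum_eq[OF assms(3,4)] unfolding space by blast+
  show ?thesis
    unfolding dual_norm_def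
  proof (rule Sup_image_eq_of_approximating_subset)
    show "E_set k \<subseteq> unit_ball k UNIV" by (rule E_set_subset_unit_ball)
    have "(\<lambda>_::'a. 1) \<in> E_set k" by (cases k) (simp_all add: E_set_def const_in_unit_ball)
    then show "E_set k \<noteq> ({} :: ('a \<Rightarrow> real) set)" by blast
    show "bdd_above (signed_integral mp mn ` unit_ball k UNIV)"
      using abs_signed_integral_le[OF assms(1,3,2,4)]
      by (intro bdd_aboveI2[where M="measure mp UNIV + measure mn UNIV"]) (simp add: abs_le_iff)
  qed (rule signed_integral_dominated_by_E_set[OF assms(1,3,2,4) S0 full])
qed

end
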